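(* Let $p\in(0,1)$ and $c\in(0,1)$, and set $\lambda_i=c^{i-1}$ for $i\ge1$. Let $r_1,r_2,\dots$ be $\{0,1\}$-valued random variables with $\Pr(r_1=1)=p$ and, for every $n\ge2$, $\Pr(r_n=1\mid r_1,\dots,r_{n-1})=\lambda_n p+(1-\lambda_n)\bar p_{n-1}$, where $\bar p_m=\frac1m\sum_{i=1}^m r_i$. Then \[\lim_{n\to\infty}\mathbb{E}\big[|\bar p_n-p|\big]\ge 2p(1-p)\exp\big(-c\,\phi(c,1,2)-c^2\,\phi(c^2,2,2)\big),\] where $\phi(z,s,a)=\sum_{k=0}^\infty\frac{z^k}{(a+k)^s}$ is the Lerch transcendent.
   Context: For $|z|<1$ the series defining $\phi(z,s,a)$ converges. *)

theory Defs
  imports "HOL-Probability.Probability"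
begin

definition lerch :: "real \<Rightarrow> real \<Rightarrow> real \<Rightarrow> real" where
  "lerch z s a = (\<Sum>k. z ^ k / (a + real k) powr s)"

definition pbar :: "(nat \<Rightarrow> 'a \<Rightarrow> real) \<Rightarrow> nat \<Rightarrow> 'a \<Rightarrow> real" where
  "pbar r m \<omega> = (\<Sum>i=1..m. r i \<omega>) / real m"

end

theory Submission
  imports Defs
begin

(* Write E_n for the mean absolute deviation E |pbar_n - p|.  Given r_1, ..., r_n, the
   conditional mean of pbar_(n+1) - p is (1 - lambda_(n+1) / (n+1)) (pbar_n - p), so by the
   triangle inequality E_(n+1) >= (1 - lambda_(n+1) / (n+1)) E_n, while E_1 = 2 p (1 - p).
   With y_k = c^(k+1) / (k+2), the quotient E_(k+1) / prod_(j<k) (1 - y_j) is therefore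
   nondecreasing and bounded, so E_n converges; as ln (1 - y) >= - y - y^2 for y <= 1/2,
   the product stays above exp (- sum_k (y_k + y_k^2)), and that sum is the Lerch expression.
   Conditioning is done by hand: since the r_i take values in {0, 1}, the expectation of a
   function of r_1, ..., r_n is a finite sum over the cylinders {r_1 = b_1, ..., r_n = b_n}. *)

lemma exp_minus_quadratic_le_one_minus:
  fixes x :: real
  assumes "0 \<le> x" "x \<le> 1/2"
  shows "exp (- x - x\<^sup>2) \<le> 1 - x"
proof -
  define h where "h t = ln (1 - t) + t + t\<^sup>2" for t :: real
  have "h 0 \<le> h x"
  proof (rule DERIV_nonneg_imp_increasing_open[OF assms(1)])
    fix t :: real assume t: "0 < t" "t < x"
    have "(h has_real_derivative (-1/(1-t) + 1 + 2*t)) (at t)"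
      unfolding h_def using t assms
      by (auto intro!: derivative_eq_intros simp: power2_eq_square field_simps)
    moreover have "-1/(1-t) + 1 + 2*t = t*(1-2*t)/(1-t)"
      using t assms by (simp add: field_simps)
    moreover have "t*(1-2*t)/(1-t) \<ge> 0" using t assms by simp
    ultimately show "\<exists>y. (h has_real_derivative y) (at t) \<and> 0 \<le> y" by auto
  next
    show "continuous_on {0..x} h" unfolding h_def using assms
      by (intro continuous_intros) auto
  qed
  hence "- x - x\<^sup>2 \<le> ln (1 - x)" by (simp add: h_def)
  hence "exp (- x - x\<^sup>2) \<le> exp (ln (1 - x))" by simp
  thus ?thesis using assms by simp
qed

lemma exp_le_prod_one_minus:
  fixes y :: "nat \<Rightarrow> real"
  assumes "\<And>k. 0 \<le> y k" "\<And>k. y k \<le> 1/2" "summable (\<lambda>k. y k + (y k)\<^sup>2)"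
  shows "exp (- (\<Sum>k. y k + (y k)\<^sup>2)) \<le> (\<Prod>j<n. 1 - y j)"
proof -
  have "(\<Sum>j<n. y j + (y j)\<^sup>2) \<le> (\<Sum>k. y k + (y k)\<^sup>2)"
    by (rule sum_le_suminf) (use assms in auto)
  hence "exp (- (\<Sum>k. y k + (y k)\<^sup>2)) \<le> exp (- (\<Sum>j<n. y j + (y j)\<^sup>2))" by simp
  also have "\<dots> = (\<Prod>j<n. exp (- y j - (y j)\<^sup>2))"
    by (simp add: exp_sum[symmetric] sum_negf[symmetric] algebra_simps)
  also have "\<dots> \<le> (\<Prod>j<n. 1 - y j)"
    by (intro prod_mono) (use exp_minus_quadratic_le_one_minus assms in auto)
  finally show ?thesis .
qed

lemma prod_one_minus_tendsto_ge_exp: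
  fixes y :: "nat \<Rightarrow> real"
  assumes "\<And>k. 0 \<le> y k" "\<And>k. y k \<le> 1/2" "summable (\<lambda>k. y k + (y k)\<^sup>2)"
  obtains l where "(\<lambda>n. \<Prod>j<n. 1 - y j) \<longlonglongrightarrow> l" "exp (- (\<Sum>k. y k + (y k)\<^sup>2)) \<le> l"
proof -
  let ?L = "\<lambda>n. \<Prod>j<n. 1 - y j"
  have "decseq ?L"
  proof (rule decseq_SucI)
    fix n
    have "0 \<le> 1 - y j" for j using assms(2)[of j] by simp
    hence "0 \<le> ?L n" by (intro prod_nonneg)
    thus "?L (Suc n) \<le> ?L n" using assms(1)[of n] by (simp add: mult_le_cancel_left2)
  qed
  then obtain l where "?L \<longlonglongrightarrow> l"
    using decseq_convergent[of ?L 0] exp_le_prod_one_minus[OF assms] exp_ge_zero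
    by (meson order_trans)
  moreover have "exp (- (\<Sum>k. y k + (y k)\<^sup>2)) \<le> l"
    using calculation by (rule LIMSEQ_le_const) (use exp_le_prod_one_minus[OF assms] in auto)
  ultimately show thesis by (rule that)
qed

lemma tendsto_ge_of_mult_recurrence:
  fixes u y :: "nat \<Rightarrow> real" and B :: real
  assumes y: "\<And>k. 0 \<le> y k" "\<And>k. y k \<le> 1/2" "summable (\<lambda>k. y k + (y k)\<^sup>2)"
    and rec: "\<And>k. (1 - y k) * u k \<le> u (Suc k)"
    and bounded: "\<And>k. u k \<le> B" and "0 \<le> u 0"
  shows "\<exists>l. u \<longlonglongrightarrow> l \<and> u 0 * exp (- (\<Sum>k. y k + (y k)\<^sup>2)) \<le> l"
proof -
  define T where "T = (\<Sum>k. y k + (y k)\<^sup>2)"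
  define L where "L n = (\<Prod>j<n. 1 - y j)" for n
  obtain l where L_lim: "L \<longlonglongrightarrow> l" and l_ge: "exp (- T) \<le> l"
    using prod_one_minus_tendsto_ge_exp[OF y] unfolding L_def T_def by blast
  have L_ge: "exp (- T) \<le> L n" for n
    unfolding L_def T_def by (rule exp_le_prod_one_minus[OF y])
  have L_pos: "0 < L n" for n using L_ge[of n] exp_gt_zero[of "- T"] by linarith
  define a where "a n = u n / L n" for n
  have "incseq a"
  proof (rule incseq_SucI)
    fix k
    have y_lt: "0 < 1 - y k" using y(2)[of k] by simp
    have "a k = ((1 - y k) * u k) / (L k * (1 - y k))" unfolding a_def using y_lt by simp
    also have "\<dots> \<le> u (Suc k) / (L k * (1 - y k))"
      using rec[of k] L_pos[of k] y_lt by (intro divide_right_mono) auto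
    finally show "a k \<le> a (Suc k)" unfolding a_def L_def by (simp add: mult.commute)
  qed
  moreover have "a n \<le> \<bar>B\<bar> * exp T" for n
  proof -
    have "a n \<le> \<bar>B\<bar> / L n"
      unfolding a_def using bounded[of n] L_pos[of n] by (intro divide_right_mono) auto
    also have "\<dots> \<le> \<bar>B\<bar> / exp (- T)"
      using L_ge[of n] by (intro divide_left_mono) (auto intro: mult_pos_pos L_pos)
    finally show ?thesis by (simp add: exp_minus field_simps)
  qed
  ultimately obtain A where a_lim: "a \<longlonglongrightarrow> A" and a_le: "\<forall>n. a n \<le> A"
    using incseq_convergent by blast
  have "(\<lambda>n. a n * L n) \<longlonglongrightarrow> A * l" using a_lim L_lim by (rule tendsto_mult)
  moreover have "a n * L n = u n" for n unfolding a_def using L_pos[of n] by simp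
  moreover have "u 0 * exp (- T) \<le> A * l"
    using a_le[rule_format, of 0] l_ge \<open>0 \<le> u 0\<close> unfolding a_def L_def
    by (intro mult_mono) auto
  ultimately show ?thesis unfolding T_def by auto
qed

lemma lerch_sums:
  fixes z s a :: real
  assumes "\<bar>z\<bar> < 1" "0 < a" "0 \<le> s"
  shows "(\<lambda>k. z ^ k / (a + real k) powr s) sums lerch z s a"
proof -
  have "summable (\<lambda>k. z ^ k / (a + real k) powr s)"
  proof (rule summable_comparison_test')
    show "summable (\<lambda>k. \<bar>z\<bar> ^ k)" using assms by simp
    show "norm (z ^ k / (a + real k) powr s) \<le> \<bar>z\<bar> ^ k" if "1 \<le> k" for k
    proof -
      have "1 \<le> (a + real k) powr s" using that assms by (intro ge_one_powr_ge_zero) auto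
      thus ?thesis by (simp add: power_abs divide_le_eq mult_le_cancel_left1)
    qed
  qed
  thus ?thesis unfolding lerch_def by (rule summable_sums)
qed

lemma lerch_combination_sums:
  fixes c :: real
  assumes "0 < c" "c < 1"
  shows "(\<lambda>k. c ^ Suc k / real (Suc (Suc k)) + (c ^ Suc k / real (Suc (Suc k)))\<^sup>2)
           sums (c * lerch c 1 2 + c\<^sup>2 * lerch (c\<^sup>2) 2 2)"
proof -
  have "\<bar>c\<^sup>2\<bar> < 1" using assms by (simp add: power_less_one_iff)
  hence "(\<lambda>k. c * (c ^ k / (2 + real k) powr 1) + c\<^sup>2 * ((c\<^sup>2) ^ k / (2 + real k) powr 2))
           sums (c * lerch c 1 2 + c\<^sup>2 * lerch (c\<^sup>2) 2 2)"
    using assms by (intro sums_add sums_mult lerch_sums) auto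
  moreover have "c * (c ^ k / (2 + real k) powr 1) + c\<^sup>2 * ((c\<^sup>2) ^ k / (2 + real k) powr 2)
      = c ^ Suc k / real (Suc (Suc k)) + (c ^ Suc k / real (Suc (Suc k)))\<^sup>2" for k
    by (simp add: powr_numeral power2_eq_square power_mult_distrib power_mult[symmetric] field_simps)
  ultimately show ?thesis by simp
qed

lemma abs_deviation_contraction:
  fixes S p lam q n :: real
  assumes "0 < n" "0 \<le> lam" "lam \<le> 1" "0 \<le> q" "q \<le> 1"
    and q: "q = lam * p + (1 - lam) * (S / n)"
  shows "(1 - lam / (n + 1)) * \<bar>S / n - p\<bar>
           \<le> (1 - q) * \<bar>S / (n + 1) - p\<bar> + q * \<bar>(S + 1) / (n + 1) - p\<bar>"
proof -
  define N where "N = n + 1"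
  have "0 < N" "n = N - 1" "n \<noteq> 0" using \<open>0 < n\<close> unfolding N_def by auto
  have "(1 - q) * (S / N - p) + q * ((S + 1) / N - p) = (S + q - N * p) / N"
    using \<open>0 < N\<close> by (simp add: field_simps)
  also have "S + q - N * p = (N - lam) * (S / n - p)"
    using \<open>n \<noteq> 0\<close> unfolding q \<open>n = N - 1\<close> by (simp add: field_simps)
  also have "(N - lam) * (S / n - p) / N = (1 - lam / N) * (S / n - p)"
    using \<open>0 < N\<close> by (simp add: field_simps)
  finally have mean:
    "(1 - q) * (S / N - p) + q * ((S + 1) / N - p) = (1 - lam / N) * (S / n - p)" .
  have "(1 - lam / N) * \<bar>S / n - p\<bar> = \<bar>(1 - lam / N) * (S / n - p)\<bar>"
    using assms(3) \<open>n = N - 1\<close> \<open>0 < n\<close> by (simp add: abs_mult divide_le_eq)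
  also have "\<dots> \<le> \<bar>(1 - q) * (S / N - p)\<bar> + \<bar>q * ((S + 1) / N - p)\<bar>"
    unfolding mean[symmetric] by (rule abs_triangle_ineq)
  also have "\<dots> = (1 - q) * \<bar>S / N - p\<bar> + q * \<bar>(S + 1) / N - p\<bar>"
    using assms(4,5) by (simp add: abs_mult)
  finally show ?thesis unfolding N_def .
qed

locale reinforced_bernoulli = prob_space M for M :: "'a measure" +
  fixes r :: "nat \<Rightarrow> 'a \<Rightarrow> real" and p :: real and lam :: "nat \<Rightarrow> real"
  assumes p_nonneg: "0 \<le> p" and p_le_1: "p \<le> 1"
    and lam_nonneg: "\<And>n. 0 \<le> lam n" and lam_le_1: "\<And>n. lam n \<le> 1"
    and r_measurable: "\<And>n. n \<ge> 1 \<Longrightarrow> r n \<in> borel_measurable M"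
    and r_values: "\<And>n \<omega>. n \<ge> 1 \<Longrightarrow> \<omega> \<in> space M \<Longrightarrow> r n \<omega> \<in> {0, 1}"
    and prob_first: "prob {\<omega> \<in> space M. r 1 \<omega> = 1} = p"
    and prob_step: "\<And>n b. n \<ge> 2 \<Longrightarrow> (\<forall>i\<in>{1..n-1}. b i \<in> {0::real, 1}) \<Longrightarrow>
           prob {\<omega> \<in> space M. (\<forall>i\<in>{1..n-1}. r i \<omega> = b i) \<and> r n \<omega> = 1}
         = (lam n * p + (1 - lam n) * ((\<Sum>i=1..n-1. b i) / real (n - 1)))
           * prob {\<omega> \<in> space M. \<forall>i\<in>{1..n-1}. r i \<omega> = b i}"
begin

definition histories :: "nat \<Rightarrow> (nat \<Rightarrow> real) set" where
  "histories n = {1..n} \<rightarrow>\<^sub>E {0, 1}"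

definition cylinder :: "nat \<Rightarrow> (nat \<Rightarrow> real) \<Rightarrow> 'a set" where
  "cylinder n b = {\<omega> \<in> space M. \<forall>i\<in>{1..n}. r i \<omega> = b i}"

definition mean_abs_dev :: "nat \<Rightarrow> real" where
  "mean_abs_dev n = (\<integral>\<omega>. \<bar>pbar r n \<omega> - p\<bar> \<partial>M)"

lemma finite_histories: "finite (histories n)"
  unfolding histories_def by (intro finite_PiE) auto

lemma sum_history_bounds:
  assumes "b \<in> histories n"
  shows "0 \<le> (\<Sum>i=1..n. b i)" "(\<Sum>i=1..n. b i) \<le> real n"
proof -
  have b: "b i \<in> {0, 1}" if "i \<in> {1..n}" for i using assms that unfolding histories_def by auto
  show "0 \<le> (\<Sum>i=1..n. b i)" by (intro sum_nonneg) (use b in force)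
  have "(\<Sum>i=1..n. b i) \<le> (\<Sum>i=1..n. 1)" by (intro sum_mono) (use b in force)
  thus "(\<Sum>i=1..n. b i) \<le> real n" by simp
qed

lemma cylinder_in_events: "cylinder n b \<in> events"
  unfolding cylinder_def
proof (rule sets.sets_Collect_finite_All)
  fix i assume "i \<in> {1..n}"
  hence "r i \<in> borel_measurable M" by (intro r_measurable) simp
  thus "{\<omega> \<in> space M. r i \<omega> = b i} \<in> events" by measurable
qed simp

lemma integral_history_eq_sum:
  "(\<integral>\<omega>. G (restrict (\<lambda>i. r i \<omega>) {1..n}) \<partial>M) = (\<Sum>b\<in>histories n. G b * prob (cylinder n b))"
proof -
  have pointwise:
    "G (restrict (\<lambda>i. r i \<omega>) {1..n}) = (\<Sum>b\<in>histories n. G b * indicator (cylinder n b) \<omega>)"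
    if \<omega>: "\<omega> \<in> space M" for \<omega>
  proof -
    let ?h = "restrict (\<lambda>i. r i \<omega>) {1..n}"
    have h: "?h \<in> histories n" using r_values \<omega> unfolding histories_def by auto
    have "\<omega> \<in> cylinder n b \<longleftrightarrow> b = ?h" if "b \<in> histories n" for b
      using that \<omega> unfolding cylinder_def histories_def by (auto simp: PiE_def extensional_def fun_eq_iff)
    hence "(\<Sum>b\<in>histories n. G b * indicator (cylinder n b) \<omega>)
        = (\<Sum>b\<in>histories n. if b = ?h then G b else 0)"
      by (intro sum.cong) (auto simp: indicator_def)
    also have "\<dots> = G ?h" using h finite_histories by (simp add: sum.delta')
    finally show ?thesis by simp
  qed
  have "(\<integral>\<omega>. G (restrict (\<lambda>i. r i \<omega>) {1..n}) \<partial>M)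
      = (\<integral>\<omega>. (\<Sum>b\<in>histories n. G b * indicator (cylinder n b) \<omega>) \<partial>M)"
    by (intro Bochner_Integration.integral_cong refl pointwise)
  also have "\<dots> = (\<Sum>b\<in>histories n. G b * prob (cylinder n b))"
    using cylinder_in_events
    by (subst Bochner_Integration.integral_sum) (auto simp: integrable_real_indicator less_top[symmetric])
  finally show ?thesis .
qed

lemma sum_prob_cylinder: "(\<Sum>b\<in>histories n. prob (cylinder n b)) = 1"
  using integral_history_eq_sum[of "\<lambda>_. 1" n] by (simp add: prob_space)

lemma mean_abs_dev_eq_sum:
  "mean_abs_dev n = (\<Sum>b\<in>histories n. \<bar>(\<Sum>i=1..n. b i) / n - p\<bar> * prob (cylinder n b))"
proof -
  have "(\<Sum>i=1..n. restrict (\<lambda>i. r i \<omega>) {1..n} i) = (\<Sum>i=1..n. r i \<omega>)" for \<omega>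
    by (intro sum.cong) auto
  hence "pbar r n \<omega> = (\<Sum>i=1..n. restrict (\<lambda>i. r i \<omega>) {1..n} i) / n" for \<omega>
    unfolding pbar_def by simp
  thus ?thesis
    unfolding mean_abs_dev_def
    using integral_history_eq_sum[of "\<lambda>b. \<bar>(\<Sum>i=1..n. b i) / n - p\<bar>" n] by simp
qed

lemma mean_abs_dev_le_1: "mean_abs_dev n \<le> 1"
proof -
  have "\<bar>(\<Sum>i=1..n. b i) / n - p\<bar> \<le> 1" if "b \<in> histories n" for b
  proof -
    have "0 \<le> (\<Sum>i=1..n. b i) / n" "(\<Sum>i=1..n. b i) / n \<le> 1"
      using sum_history_bounds[OF that] by (auto simp: divide_le_eq_1)
    thus ?thesis using p_nonneg p_le_1 by (auto simp: abs_le_iff)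
  qed
  hence "mean_abs_dev n \<le> (\<Sum>b\<in>histories n. 1 * prob (cylinder n b))"
    unfolding mean_abs_dev_eq_sum by (intro sum_mono mult_right_mono) auto
  thus ?thesis using sum_prob_cylinder by simp
qed

lemma cylinder_Suc:
  "cylinder (Suc m) h = {\<omega> \<in> space M. (\<forall>i\<in>{1..m}. r i \<omega> = h i) \<and> r (Suc m) \<omega> = h (Suc m)}"
proof -
  have "{1..Suc m} = insert (Suc m) {1..m}" by auto
  thus ?thesis unfolding cylinder_def by auto
qed

lemma cylinder_extend_subset: "cylinder (Suc m) (g(Suc m := y)) \<subseteq> cylinder m g"
  unfolding cylinder_def by auto

lemma cylinder_extend_0:
  "cylinder (Suc m) (g(Suc m := 0)) = cylinder m g - cylinder (Suc m) (g(Suc m := 1))"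
proof -
  have "r (Suc m) \<omega> \<in> {0, 1}" if "\<omega> \<in> space M" for \<omega> using r_values that by simp
  thus ?thesis unfolding cylinder_Suc unfolding cylinder_def by auto
qed

lemma mean_abs_dev_Suc_eq_sum:
  "mean_abs_dev (Suc m) = (\<Sum>g\<in>histories m.
       \<bar>(\<Sum>i=1..m. g i) / Suc m - p\<bar> * prob (cylinder (Suc m) (g(Suc m := 0)))
     + \<bar>((\<Sum>i=1..m. g i) + 1) / Suc m - p\<bar> * prob (cylinder (Suc m) (g(Suc m := 1))))"
proof -
  let ?f = "\<lambda>b. \<bar>(\<Sum>i=1..Suc m. b i) / Suc m - p\<bar> * prob (cylinder (Suc m) b)"
  let ?extend = "\<lambda>(y, g). g(Suc m := y)"
  have "{1..Suc m} = insert (Suc m) {1..m}" by auto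
  hence histories_Suc: "histories (Suc m) = ?extend ` ({0, 1} \<times> histories m)"
    unfolding histories_def by (simp add: PiE_insert_eq)
  have inj: "inj_on ?extend ({0, 1} \<times> histories m)"
    unfolding histories_def using inj_combinator[of "Suc m" "{1..m}" "\<lambda>_. {0::real, 1}"] by simp
  have sum_extend: "(\<Sum>i=1..Suc m. (g(Suc m := y)) i) = (\<Sum>i=1..m. g i) + y"
    for g :: "nat \<Rightarrow> real" and y
  proof -
    have "(\<Sum>i=1..m. (g(Suc m := y)) i) = (\<Sum>i=1..m. g i)" by (intro sum.cong) auto
    thus ?thesis by (simp add: sum.cl_ivl_Suc)
  qed
  have "mean_abs_dev (Suc m) = (\<Sum>(y, g)\<in>{0, 1} \<times> histories m. ?f (g(Suc m := y)))"
    unfolding mean_abs_dev_eq_sum histories_Suc sum.reindex[OF inj] by (simp add: case_prod_unfold)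
  also have "\<dots> = (\<Sum>y\<in>{0, 1}. \<Sum>g\<in>histories m. ?f (g(Suc m := y)))"
    by (rule sum.cartesian_product[symmetric])
  also have "\<dots> = (\<Sum>g\<in>histories m. ?f (g(Suc m := 0)) + ?f (g(Suc m := 1)))"
    by (simp add: sum.distrib)
  finally show ?thesis by (simp only: sum_extend) simp
qed

lemma prob_cylinder_extend:
  assumes "m \<ge> 1" "g \<in> histories m"
  defines "q \<equiv> lam (Suc m) * p + (1 - lam (Suc m)) * ((\<Sum>i=1..m. g i) / m)"
  shows "prob (cylinder (Suc m) (g(Suc m := 1))) = q * prob (cylinder m g)"
    and "prob (cylinder (Suc m) (g(Suc m := 0))) = (1 - q) * prob (cylinder m g)"
proof -
  have "\<forall>i\<in>{1..Suc m - 1}. g i \<in> {0, 1}" using assms(2) unfolding histories_def by auto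
  thus one: "prob (cylinder (Suc m) (g(Suc m := 1))) = q * prob (cylinder m g)"
    using prob_step[of "Suc m" g] assms(1) unfolding cylinder_Suc q_def by (simp add: cylinder_def)
  have "prob (cylinder m g - cylinder (Suc m) (g(Suc m := 1)))
      = prob (cylinder m g) - prob (cylinder (Suc m) (g(Suc m := 1)))"
    by (rule finite_measure_Diff[OF cylinder_in_events cylinder_in_events cylinder_extend_subset])
  thus "prob (cylinder (Suc m) (g(Suc m := 0))) = (1 - q) * prob (cylinder m g)"
    unfolding cylinder_extend_0 one by (simp add: algebra_simps)
qed

lemma mean_abs_dev_1: "mean_abs_dev 1 = 2 * p * (1 - p)"
proof -
  define g :: "nat \<Rightarrow> real" where "g = (\<lambda>_. undefined)"
  let ?A = "{\<omega> \<in> space M. r 1 \<omega> = 1}"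
  have "histories 0 = {g}" unfolding histories_def g_def by auto
  hence "mean_abs_dev 1
      = p * prob (cylinder 1 (g(1 := 0))) + (1 - p) * prob (cylinder 1 (g(1 := 1)))"
    using mean_abs_dev_Suc_eq_sum[of 0] p_nonneg p_le_1 by simp
  moreover have one: "cylinder 1 (g(1 := 1)) = ?A"
    unfolding cylinder_def by auto
  moreover have "cylinder 1 (g(1 := 0)) = space M - ?A"
    using cylinder_extend_0[of 0 g] one by (simp add: cylinder_def)
  moreover have "prob (space M - ?A) = 1 - p"
    using cylinder_in_events one prob_first by (metis prob_compl)
  ultimately show ?thesis using prob_first by simp
qed

lemma mean_abs_dev_Suc_ge:
  assumes "m \<ge> 1"
  shows "(1 - lam (Suc m) / Suc m) * mean_abs_dev m \<le> mean_abs_dev (Suc m)"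
proof -
  have "(1 - lam (Suc m) / Suc m) * (\<bar>(\<Sum>i=1..m. g i) / m - p\<bar> * prob (cylinder m g))
     \<le> \<bar>(\<Sum>i=1..m. g i) / Suc m - p\<bar> * prob (cylinder (Suc m) (g(Suc m := 0)))
       + \<bar>((\<Sum>i=1..m. g i) + 1) / Suc m - p\<bar> * prob (cylinder (Suc m) (g(Suc m := 1)))"
    if g: "g \<in> histories m" for g
  proof -
    define S where "S = (\<Sum>i=1..m. g i)"
    define q where "q = lam (Suc m) * p + (1 - lam (Suc m)) * (S / m)"
    have "0 \<le> S / m" "S / m \<le> 1"
      unfolding S_def using sum_history_bounds[OF g] assms by (auto simp: divide_le_eq_1)
    hence "0 \<le> q" "q \<le> 1"
      unfolding q_def using lam_nonneg lam_le_1 p_nonneg p_le_1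
      by (auto simp del: times_divide_eq_right intro: convex_bound_le)
    hence "(1 - lam (Suc m) / (real m + 1)) * \<bar>S / m - p\<bar>
           \<le> (1 - q) * \<bar>S / (real m + 1) - p\<bar> + q * \<bar>(S + 1) / (real m + 1) - p\<bar>"
      using assms lam_nonneg lam_le_1 by (intro abs_deviation_contraction) (auto simp: q_def)
    moreover have "real m + 1 = Suc m" by simp
    ultimately have "(1 - lam (Suc m) / Suc m) * \<bar>S / m - p\<bar> * prob (cylinder m g)
        \<le> ((1 - q) * \<bar>S / Suc m - p\<bar> + q * \<bar>(S + 1) / Suc m - p\<bar>) * prob (cylinder m g)"
      by (intro mult_right_mono) simp_all
    thus ?thesis
      unfolding prob_cylinder_extend[OF assms g] S_def[symmetric] q_def[symmetric]
      by (simp add: algebra_simps)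
  qed
  thus ?thesis
    unfolding mean_abs_dev_eq_sum[of m] mean_abs_dev_Suc_eq_sum sum_distrib_left by (rule sum_mono)
qed

end

theorem propositionA8:
  fixes M :: "'a measure" and r :: "nat \<Rightarrow> 'a \<Rightarrow> real" and p c :: real
  assumes "prob_space M"
    and "0 < p" "p < 1" "0 < c" "c < 1"
    and "\<And>n. n \<ge> 1 \<Longrightarrow> r n \<in> borel_measurable M"
    and "\<And>n \<omega>. n \<ge> 1 \<Longrightarrow> \<omega> \<in> space M \<Longrightarrow> r n \<omega> \<in> {0, 1}"
    and "measure M {\<omega> \<in> space M. r 1 \<omega> = 1} = p"
    and "\<And>n b. n \<ge> 2 \<Longrightarrow> (\<forall>i\<in>{1..n-1}. b i \<in> {0::real, 1}) \<Longrightarrow>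
           measure M {\<omega> \<in> space M. (\<forall>i\<in>{1..n-1}. r i \<omega> = b i) \<and> r n \<omega> = 1}
         = (c ^ (n - 1) * p + (1 - c ^ (n - 1)) * ((\<Sum>i=1..n-1. b i) / real (n - 1)))
           * measure M {\<omega> \<in> space M. \<forall>i\<in>{1..n-1}. r i \<omega> = b i}"
  shows "convergent (\<lambda>n. integral\<^sup>L M (\<lambda>\<omega>. \<bar>pbar r n \<omega> - p\<bar>))
       \<and> lim (\<lambda>n. integral\<^sup>L M (\<lambda>\<omega>. \<bar>pbar r n \<omega> - p\<bar>))
           \<ge> 2 * p * (1 - p) * exp (- c * lerch c 1 2 - c\<^sup>2 * lerch (c\<^sup>2) 2 2)"
proof -
  interpret reinforced_bernoulli M r p "\<lambda>n. c ^ (n - 1)"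
    by (intro reinforced_bernoulli.intro reinforced_bernoulli_axioms.intro assms(1,6-9))
       (use assms(2-5) in \<open>auto simp: power_le_one\<close>)
  define T where "T = c * lerch c 1 2 + c\<^sup>2 * lerch (c\<^sup>2) 2 2"
  define y where "y k = c ^ Suc k / real (Suc (Suc k))" for k
  have y_sums: "(\<lambda>k. y k + (y k)\<^sup>2) sums T"
    unfolding y_def T_def using assms(4,5) by (rule lerch_combination_sums)
  have y_bounds: "0 \<le> y k" "y k \<le> 1/2" for k
    unfolding y_def using assms(4,5) power_le_one[of c "Suc k"] by (auto simp: divide_le_eq)
  have "(1 - y k) * mean_abs_dev (Suc k) \<le> mean_abs_dev (Suc (Suc k))" for k
    using mean_abs_dev_Suc_ge[of "Suc k"] unfolding y_def by simp
  from tendsto_ge_of_mult_recurrence[OF y_bounds sums_summable[OF y_sums] this mean_abs_dev_le_1]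
  obtain l where "(\<lambda>k. mean_abs_dev (Suc k)) \<longlonglongrightarrow> l" and "2 * p * (1 - p) * exp (- T) \<le> l"
    using mean_abs_dev_1 assms(2,3) unfolding sums_unique[OF y_sums, symmetric] by auto
  hence "mean_abs_dev \<longlonglongrightarrow> l" "2 * p * (1 - p) * exp (- T) \<le> lim mean_abs_dev"
    by (auto dest: LIMSEQ_imp_Suc simp: limI)
  moreover have "(\<lambda>n. integral\<^sup>L M (\<lambda>\<omega>. \<bar>pbar r n \<omega> - p\<bar>)) = mean_abs_dev"
    unfolding mean_abs_dev_def ..
  moreover have "- c * lerch c 1 2 - c\<^sup>2 * lerch (c\<^sup>2) 2 2 = - T" unfolding T_def by simp
  ultimately show ?thesis by (auto simp: convergent_def)
qed

end
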